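(* For every graph $G$ and every connected subgraph $H\subseteq G$, $$R_3(G)\geqslant (\chi(H)-1)(R_2(H)-1)+1.$$
   Context: For a graph $G$ and integer $r\geqslant 2$, the $r$-colour Ramsey number $R_r(G)$ is the smallest integer $N$ such that every colouring of the edges of $K_N$ with $r$ colours contains a monochromatic copy of $G$. $\chi(H)$ denotes the chromatic number of $H$. *)

theory Defs
  imports Main
begin

definition graph :: "'a set \<Rightarrow> 'a set set \<Rightarrow> bool" where
  "graph V E \<longleftrightarrow> finite V \<and> (\<forall>e\<in>E. e \<subseteq> V \<and> card e = 2)"

definition subgraph :: "'a set \<Rightarrow> 'a set set \<Rightarrow> 'a set \<Rightarrow> 'a set set \<Rightarrow> bool" where
  "subgraph W F V E \<longleftrightarrow> graph W F \<and> graph V E \<and> W \<subseteq> V \<and> F \<subseteq> E"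

definition adj :: "'a set set \<Rightarrow> 'a \<Rightarrow> 'a \<Rightarrow> bool" where
  "adj E u v \<longleftrightarrow> {u, v} \<in> E"

definition connected_graph :: "'a set \<Rightarrow> 'a set set \<Rightarrow> bool" where
  "connected_graph V E \<longleftrightarrow> graph V E \<and> V \<noteq> {} \<and>
     (\<forall>u\<in>V. \<forall>v\<in>V. (adj E)\<^sup>*\<^sup>* u v)"

definition proper_colouring :: "'a set \<Rightarrow> 'a set set \<Rightarrow> nat \<Rightarrow> ('a \<Rightarrow> nat) \<Rightarrow> bool" where
  "proper_colouring V E k f \<longleftrightarrow> (\<forall>v\<in>V. f v < k) \<and> (\<forall>u v. {u, v} \<in> E \<longrightarrow> f u \<noteq> f v)"

definition chromatic_number :: "'a set \<Rightarrow> 'a set set \<Rightarrow> nat" where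
  "chromatic_number V E = (LEAST k. \<exists>f. proper_colouring V E k f)"

definition ramsey_prop :: "nat \<Rightarrow> 'a set \<Rightarrow> 'a set set \<Rightarrow> nat \<Rightarrow> bool" where
  "ramsey_prop r V E N \<longleftrightarrow>
     (\<forall>c :: nat set \<Rightarrow> nat. (\<forall>e. e \<subseteq> {..<N} \<and> card e = 2 \<longrightarrow> c e < r) \<longrightarrow>
        (\<exists>col<r. \<exists>\<phi>. inj_on \<phi> V \<and> \<phi> ` V \<subseteq> {..<N} \<and> (\<forall>e\<in>E. c (\<phi> ` e) = col)))"

definition ramsey_number :: "nat \<Rightarrow> 'a set \<Rightarrow> 'a set set \<Rightarrow> nat" where
  "ramsey_number r V E = (LEAST N. ramsey_prop r V E N)"

end

theory Submission
  imports Defs "HOL-Library.Ramsey"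
begin

text \<open>Let \<open>k = \<chi>(H) - 1\<close> and \<open>m = R\<^sub>2(H) - 1\<close>. Split \<open>K\<^sub>k\<^sub>m\<close> into \<open>k\<close> blocks of
  \<open>m\<close> vertices, colour each block by a 2-colouring of \<open>K\<^sub>m\<close> without a monochromatic \<open>H\<close>, and
  give all edges between blocks a third colour. A monochromatic copy of \<open>G\<close> contains one
  of \<open>H\<close>. In one of the first two colours it has no edge between blocks, so, \<open>H\<close> being
  connected, it lies inside a single block, which is impossible; in the third colour the
  block index is a proper \<open>k\<close>-colouring of \<open>H\<close>, which is impossible as well.\<close>

lemma ramsey_propE:
  assumes "ramsey_prop r V E N" "\<forall>e. e \<subseteq> {..<N} \<and> card e = 2 \<longrightarrow> c e < r"
  obtains col \<phi> where "col < r" "inj_on \<phi> V" "\<phi> ` V \<subseteq> {..<N}" "\<forall>e\<in>E. c (\<phi> ` e) = col"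
  using assms(1)[unfolded ramsey_prop_def, THEN spec[of _ c]] assms(2) by blast

lemma not_ramsey_propE:
  assumes "\<not> ramsey_prop r V E N"
  obtains c where "\<forall>e. e \<subseteq> {..<N} \<and> card e = 2 \<longrightarrow> c e < r"
    "\<forall>col<r. \<forall>\<phi>. inj_on \<phi> V \<and> \<phi> ` V \<subseteq> {..<N} \<longrightarrow> (\<exists>e\<in>E. c (\<phi> ` e) \<noteq> col)"
  using assms unfolding ramsey_prop_def by auto

lemma ramsey_prop_mono:
  assumes "ramsey_prop r V E n" "n \<le> N"
  shows "ramsey_prop r V E N"
  unfolding ramsey_prop_def
proof (intro allI impI)
  fix c :: "nat set \<Rightarrow> nat"
  assume "\<forall>e. e \<subseteq> {..<N} \<and> card e = 2 \<longrightarrow> c e < r"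
  then have "\<forall>e. e \<subseteq> {..<n} \<and> card e = 2 \<longrightarrow> c e < r"
    using assms(2) by (meson lessThan_subset_iff subset_trans)
  with assms(1) obtain col \<phi> where col: "col < r" and \<phi>: "inj_on \<phi> V" "\<phi> ` V \<subseteq> {..<n}"
    and mono: "\<forall>e\<in>E. c (\<phi> ` e) = col"
    by (rule ramsey_propE) blast
  have "\<phi> ` V \<subseteq> {..<N}"
    using \<phi>(2) assms(2) by auto
  with col \<phi>(1) mono
  show "\<exists>col<r. \<exists>\<phi>. inj_on \<phi> V \<and> \<phi> ` V \<subseteq> {..<N} \<and> (\<forall>e\<in>E. c (\<phi> ` e) = col)"
    by (intro exI[of _ col] conjI exI[of _ \<phi>])
qed

lemma ramsey_prop_exists:
  assumes "graph V E"
  shows "\<exists>N. ramsey_prop r V E N"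
proof -
  obtain N :: nat where N: "partn_lst {..<N} (replicate r (card V)) 2"
    using ramsey_full by blast
  have "ramsey_prop r V E N"
    unfolding ramsey_prop_def
  proof (intro allI impI)
    fix c :: "nat set \<Rightarrow> nat"
    assume "\<forall>e. e \<subseteq> {..<N} \<and> card e = 2 \<longrightarrow> c e < r"
    then have c: "c \<in> nsets {..<N} 2 \<rightarrow> {..<r}"
      by (auto simp: nsets_def)
    obtain i H where "i < length (replicate r (card V))"
      and "H \<in> nsets {..<N} (replicate r (card V) ! i)" and mono: "c ` nsets H 2 \<subseteq> {i}"
      by (rule partn_lstE[OF N c]) simp
    then have i: "i < r" and H: "H \<in> nsets {..<N} (card V)"
      by simp_all
    have "finite V"
      using assms by (simp add: graph_def)
    moreover have "finite H" "card V = card H"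
      using H by (simp_all add: nsets_def)
    ultimately obtain \<phi> where \<phi>: "bij_betw \<phi> V H"
      using finite_same_card_bij by blast
    have "c (\<phi> ` e) = i" if "e \<in> E" for e
    proof -
      have e: "e \<subseteq> V" "card e = 2"
        using assms that by (auto simp: graph_def)
      have "inj_on \<phi> e" "\<phi> ` e \<subseteq> H"
        using \<phi> e(1) by (auto simp: bij_betw_def inj_on_subset)
      then have "\<phi> ` e \<in> nsets H 2"
        using e(2) \<open>finite H\<close> by (simp add: nsets_def card_image finite_subset)
      then show ?thesis
        using mono by blast
    qed
    moreover have "inj_on \<phi> V" "\<phi> ` V \<subseteq> {..<N}"
      using \<phi> H by (auto simp: bij_betw_def nsets_def)
    ultimately show "\<exists>col<r. \<exists>\<phi>. inj_on \<phi> V \<and> \<phi> ` V \<subseteq> {..<N} \<and> (\<forall>e\<in>E. c (\<phi> ` e) = col)"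
      using i by (intro exI[of _ i] conjI exI[of _ \<phi>]) auto
  qed
  then show ?thesis ..
qed

lemma ramsey_number_greater:
  assumes "graph V E" "\<not> ramsey_prop r V E N"
  shows "N < ramsey_number r V E"
proof (rule ccontr)
  obtain N0 where "ramsey_prop r V E N0"
    using ramsey_prop_exists[OF assms(1)] ..
  then have "ramsey_prop r V E (ramsey_number r V E)"
    unfolding ramsey_number_def by (rule LeastI)
  moreover assume "\<not> N < ramsey_number r V E"
  ultimately have "ramsey_prop r V E N"
    by (simp add: ramsey_prop_mono)
  with assms(2) show False ..
qed

lemma not_ramsey_prop_zero:
  assumes "V \<noteq> {}"
  shows "\<not> ramsey_prop r V E 0"
  using assms unfolding ramsey_prop_def by auto

lemma not_ramsey_prop_pred_ramsey_number:
  assumes "V \<noteq> {}"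
  shows "\<not> ramsey_prop r V E (ramsey_number r V E - 1)"
proof (cases "ramsey_number r V E = 0")
  case True
  then show ?thesis
    using not_ramsey_prop_zero[OF assms] by simp
next
  case False
  then show ?thesis
    unfolding ramsey_number_def by (intro not_less_Least) simp
qed

lemma not_proper_colouring_pred_chromatic_number:
  assumes "V \<noteq> {}"
  shows "\<not> proper_colouring V E (chromatic_number V E - 1) f"
proof (cases "chromatic_number V E = 0")
  case True
  then show ?thesis
    using assms by (auto simp: proper_colouring_def)
next
  case False
  then have "chromatic_number V E - 1 < chromatic_number V E"
    by simp
  then show ?thesis
    unfolding chromatic_number_def using not_less_Least by blast
qed

text \<open>Vertex \<open>x\<close> of \<open>K\<^bsub>k m\<^esub>\<close> is vertex \<open>x mod m\<close> of block \<open>x div m\<close>.\<close>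
definition block_colouring :: "nat \<Rightarrow> (nat set \<Rightarrow> nat) \<Rightarrow> nat \<Rightarrow> nat set \<Rightarrow> nat" where
  "block_colouring m c cross e =
     (if \<exists>b. \<forall>x\<in>e. x div m = b then c ((\<lambda>x. x mod m) ` e) else cross)"

lemma inj_on_mod_if_same_div:
  fixes m :: "'a::semiring_modulo"
  assumes "\<forall>x\<in>A. x div m = b"
  shows "inj_on (\<lambda>x. x mod m) A"
proof (rule inj_onI)
  fix x y
  assume "x \<in> A" "y \<in> A" "x mod m = y mod m"
  then have "x div m * m + x mod m = y div m * m + y mod m"
    using assms by simp
  then show "x = y"
    by (simp only: div_mult_mod_eq)
qed

lemma block_colouring_in_block:
  assumes "\<forall>x\<in>e. x div m = b"
  shows "block_colouring m c cross e = c ((\<lambda>x. x mod m) ` e)"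
  using assms unfolding block_colouring_def by auto

lemma block_colouring_same_block:
  assumes c: "\<forall>e. e \<subseteq> {..<m} \<and> card e = 2 \<longrightarrow> c e < r"
    and "0 < m" "card e = 2" "\<forall>x\<in>e. x div m = b"
  shows "block_colouring m c cross e < r"
proof -
  have "card ((\<lambda>x. x mod m) ` e) = 2"
    using inj_on_mod_if_same_div[OF assms(4)] assms(3) by (simp add: card_image)
  moreover have "(\<lambda>x. x mod m) ` e \<subseteq> {..<m}"
    using \<open>0 < m\<close> by auto
  ultimately show ?thesis
    using c block_colouring_in_block[OF assms(4)] by simp
qed

lemma block_colouring_less:
  assumes "\<forall>e. e \<subseteq> {..<m} \<and> card e = 2 \<longrightarrow> c e < r" "0 < m" "card e = 2"
  shows "block_colouring m c r e < Suc r"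
proof (cases "\<exists>b. \<forall>x\<in>e. x div m = b")
  case True
  then show ?thesis
    using block_colouring_same_block[OF assms] less_SucI by blast
next
  case False
  then have "block_colouring m c r e = r"
    unfolding block_colouring_def by (simp only: if_False)
  then show ?thesis
    by simp
qed

lemma connected_graph_edge_invariant:
  assumes "connected_graph V E" "\<And>u v. {u, v} \<in> E \<Longrightarrow> g u = g v" "u \<in> V" "v \<in> V"
  shows "g u = g v"
proof -
  have "(adj E)\<^sup>*\<^sup>* u v"
    using assms(1,3,4) by (simp add: connected_graph_def)
  then show ?thesis
    by (induction rule: rtranclp_induct) (auto simp: adj_def dest: assms(2))
qed

lemma graph_edge_image:
  assumes "graph V E" "inj_on \<phi> V" "{u, v} \<in> E"
  shows "u \<in> V" "v \<in> V" "card (\<phi> ` {u, v}) = 2"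
proof -
  have "{u, v} \<subseteq> V" "card {u, v} = 2"
    using assms(1,3) by (auto simp: graph_def)
  then show "u \<in> V" "v \<in> V"
    by auto
  have "u \<noteq> v"
    using \<open>card {u, v} = 2\<close> by auto
  with \<open>{u, v} \<subseteq> V\<close> have "\<phi> u \<noteq> \<phi> v"
    using assms(2) by (auto dest: inj_onD)
  then show "card (\<phi> ` {u, v}) = 2"
    by simp
qed

lemma proper_colouring_block_index:
  assumes "graph W F" "inj_on \<phi> W" "\<phi> ` W \<subseteq> {..<k * m}"
    and c: "\<forall>e. e \<subseteq> {..<m} \<and> card e = 2 \<longrightarrow> c e < r"
    and mono: "\<forall>e\<in>F. block_colouring m c r (\<phi> ` e) = r"
  shows "proper_colouring W F k (\<lambda>x. \<phi> x div m)"
  unfolding proper_colouring_def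
proof (intro conjI allI impI ballI)
  fix v
  assume "v \<in> W"
  then show "\<phi> v div m < k"
    using assms(3) by (auto intro: less_mult_imp_div_less)
next
  fix u v
  assume uv: "{u, v} \<in> F"
  note edge = graph_edge_image[OF assms(1,2) uv]
  show "\<phi> u div m \<noteq> \<phi> v div m"
  proof
    assume "\<phi> u div m = \<phi> v div m"
    moreover have "0 < m"
      using assms(3) edge(1) by (auto intro: Nat.gr0I)
    ultimately have "block_colouring m c r (\<phi> ` {u, v}) < r"
      using block_colouring_same_block[OF c _ edge(3), of "\<phi> u div m"] by auto
    with mono[rule_format, OF uv] show False
      by simp
  qed
qed

lemma copy_in_single_block:
  assumes conn: "connected_graph W F" and "inj_on \<phi> W" "0 < m"
    and mono: "\<forall>e\<in>F. block_colouring m c cross (\<phi> ` e) = col" "col \<noteq> cross"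
  shows "inj_on (\<lambda>x. \<phi> x mod m) W" "(\<lambda>x. \<phi> x mod m) ` W \<subseteq> {..<m}"
    "\<forall>e\<in>F. c ((\<lambda>x. \<phi> x mod m) ` e) = col"
proof -
  have edge: "\<phi> u div m = \<phi> v div m" if "{u, v} \<in> F" for u v
    using mono that by (auto simp: block_colouring_def split: if_splits)
  obtain w where "w \<in> W"
    using conn by (auto simp: connected_graph_def)
  have "\<phi> x div m = \<phi> w div m" if "x \<in> W" for x
    using conn edge that \<open>w \<in> W\<close> by (rule connected_graph_edge_invariant)
  then have block: "\<forall>y\<in>\<phi> ` W. y div m = \<phi> w div m"
    by blast
  show "inj_on (\<lambda>x. \<phi> x mod m) W"
    using comp_inj_on[OF assms(2) inj_on_mod_if_same_div[OF block]] by (simp add: comp_def)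
  show "(\<lambda>x. \<phi> x mod m) ` W \<subseteq> {..<m}"
    using \<open>0 < m\<close> by auto
  show "\<forall>e\<in>F. c ((\<lambda>x. \<phi> x mod m) ` e) = col"
  proof
    fix e
    assume "e \<in> F"
    moreover have "e \<subseteq> W"
      using conn \<open>e \<in> F\<close> by (auto simp: connected_graph_def graph_def)
    then have "\<forall>y\<in>\<phi> ` e. y div m = \<phi> w div m"
      using block by blast
    then have "block_colouring m c cross (\<phi> ` e) = c ((\<lambda>x. \<phi> x mod m) ` e)"
      by (simp only: block_colouring_in_block image_image)
    with mono(1) \<open>e \<in> F\<close> show "c ((\<lambda>x. \<phi> x mod m) ` e) = col"
      by simp
  qed
qed

lemma not_ramsey_prop_block_blowup:
  assumes sub: "subgraph W F V E" and conn: "connected_graph W F"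
    and no_copy: "\<not> ramsey_prop r W F m" and no_colouring: "\<And>f. \<not> proper_colouring W F k f"
  shows "\<not> ramsey_prop (Suc r) V E (k * m)"
proof
  assume blowup: "ramsey_prop (Suc r) V E (k * m)"
  obtain c where c: "\<forall>e. e \<subseteq> {..<m} \<and> card e = 2 \<longrightarrow> c e < r"
    and no_mono: "\<forall>col<r. \<forall>\<phi>. inj_on \<phi> W \<and> \<phi> ` W \<subseteq> {..<m} \<longrightarrow> (\<exists>e\<in>F. c (\<phi> ` e) \<noteq> col)"
    using no_copy by (rule not_ramsey_propE)
  have "\<forall>e. e \<subseteq> {..<k * m} \<and> card e = 2 \<longrightarrow> block_colouring m c r e < Suc r"
  proof (intro allI impI)
    fix e :: "nat set"
    assume e: "e \<subseteq> {..<k * m} \<and> card e = 2"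
    then have "0 < m"
      by (cases "m = 0") auto
    with e show "block_colouring m c r e < Suc r"
      using block_colouring_less[OF c] by blast
  qed
  with blowup obtain col \<phi> where col: "col < Suc r" and \<phi>: "inj_on \<phi> V" "\<phi> ` V \<subseteq> {..<k * m}"
    and mono: "\<forall>e\<in>E. block_colouring m c r (\<phi> ` e) = col"
    by (rule ramsey_propE) blast
  have "W \<subseteq> V" "F \<subseteq> E" "graph W F"
    using sub by (auto simp: subgraph_def)
  with \<phi> mono have \<phi>W: "inj_on \<phi> W" "\<phi> ` W \<subseteq> {..<k * m}"
    and monoW: "\<forall>e\<in>F. block_colouring m c r (\<phi> ` e) = col"
    by (auto intro: inj_on_subset)
  show False
  proof (cases "col = r")
    case True
    then have "proper_colouring W F k (\<lambda>x. \<phi> x div m)"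
      using proper_colouring_block_index[OF \<open>graph W F\<close> \<phi>W c] monoW by simp
    with no_colouring show False
      by blast
  next
    case False
    obtain w where "w \<in> W"
      using conn by (auto simp: connected_graph_def)
    with \<phi>W(2) have "0 < m"
      by (cases "m = 0") auto
    have "col < r"
      using col False by simp
    with no_mono have "\<exists>e\<in>F. c ((\<lambda>x. \<phi> x mod m) ` e) \<noteq> col"
      using copy_in_single_block(1,2)[OF conn \<phi>W(1) \<open>0 < m\<close> monoW False] by simp
    with copy_in_single_block(3)[OF conn \<phi>W(1) \<open>0 < m\<close> monoW False] show False
      by blast
  qed
qed

theorem lemma4p1:
  fixes V W :: "'a set" and E F :: "'a set set"
  assumes "graph V E"
    and "subgraph W F V E"
    and "connected_graph W F"
  shows "ramsey_number 3 V E \<ge>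
           (chromatic_number W F - 1) * (ramsey_number 2 W F - 1) + 1"
proof -
  have "W \<noteq> {}"
    using assms(3) by (simp add: connected_graph_def)
  then have "\<not> ramsey_prop (Suc 2) V E
      ((chromatic_number W F - 1) * (ramsey_number 2 W F - 1))"
    by (intro not_ramsey_prop_block_blowup[OF assms(2,3)] not_ramsey_prop_pred_ramsey_number
        not_proper_colouring_pred_chromatic_number)
  then have "(chromatic_number W F - 1) * (ramsey_number 2 W F - 1) < ramsey_number 3 V E"
    using ramsey_number_greater[OF assms(1)] by (simp add: numeral_3_eq_3)
  then show ?thesis
    by simp
qed

end
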